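(* Let $\mathcal T$ be an orbital category and $\mathcal C$ a $\mathcal T$-weak indexing system. Then: (1) $\mathcal C$ has one color if and only if $c(\mathcal C)=\mathcal T$; (2) $\mathcal C$ satisfies the condition "for all $S\sqcup S'\in\mathcal C_V$, $S,S'\in\mathcal C_V$" if and only if $\upsilon(\mathcal C)=c(\mathcal C)$; (3) $\mathcal C$ is unital if and only if $\upsilon(\mathcal C)=\mathcal T$; (4) $\mathcal C$ is an indexing system if and only if $\upsilon(\mathcal C)\cap\nabla(\mathcal C)=\mathcal T$.
   Context: For a small category $\mathcal T$, $\mathbb F_{\mathcal T}$ is the full subcategory of $\mathrm{Fun}(\mathcal T^{op},\mathrm{Set})$ on finite coproducts of representables; $\mathcal T$ is orbital if $\mathbb F_{\mathcal T}$ has pullbacks. $\mathbb F_V:=\mathbb F_{\mathcal T,/V}$, $*_V$ terminal, $\emptyset_V$ initial, $n\cdot S$ the $n$-fold coproduct; for $U\to V$ in $\mathcal T$, $\mathrm{Res}^V_U$ is pullback and $\mathrm{Ind}^V_U$ postcomposition. A full $\mathcal T$-subcategory $\mathcal C$ assigns isomorphism-closed classes $\mathcal C_V\subseteq\mathrm{Ob}\,\mathbb F_V$ stable under all restrictions. For $S\in\mathbb F_V$ with orbits $U\in\mathrm{Orb}(S)$ and $T_U\in\mathbb F_U$, $\coprod_U^ST_U:=\coprod_U\mathrm{Ind}_U^VT_U$. A $\mathcal T$-weak indexing system is a full $\mathcal T$-subcategory $\mathcal C$ with $\mathcal C_V\neq\emptyset\Rightarrow *_V\in\mathcal C_V$ and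 closed under $\coprod^S_U T_U$ for $S\in\mathcal C_V$, $T_U\in\mathcal C_U$. It has one color if $\mathcal C_V\neq\emptyset$ for all $V$; it is unital if it has one color and $S\sqcup S'\in\mathcal C_V$ implies $S,S'\in\mathcal C_V$; it is an indexing system if every $\mathcal C_V$ is closed under finite coproducts in $\mathbb F_V$. $c(\mathcal C)=\{V\mid *_V\in\mathcal C_V\}$, $\upsilon(\mathcal C)=\{V\mid\emptyset_V\in\mathcal C_V\}$, $\nabla(\mathcal C)=\{V\mid 2\cdot *_V\in\mathcal C_V\}$. *)

theory Defs
  imports Main
begin

text \<open>Morphisms are labels of type 'm; a morphism is always used together with its
  typing f : A -> B, so the structure is a genuine category (morphisms = triples).\<close>

record ('o, 'm) cat =
  Ob  :: "'o set"
  Hom :: "'o \<Rightarrow> 'o \<Rightarrow> 'm set"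
  cmp :: "'m \<Rightarrow> 'm \<Rightarrow> 'm"   (* cmp g f = g o f *)
  idt :: "'o \<Rightarrow> 'm"

definition category :: "('o, 'm) cat \<Rightarrow> bool" where
  "category T \<longleftrightarrow>
     (\<forall>A B. Hom T A B \<noteq> {} \<longrightarrow> A \<in> Ob T \<and> B \<in> Ob T) \<and>
     (\<forall>A\<in>Ob T. idt T A \<in> Hom T A A) \<and>
     (\<forall>A B C f g. f \<in> Hom T A B \<longrightarrow> g \<in> Hom T B C \<longrightarrow> cmp T g f \<in> Hom T A C) \<and>
     (\<forall>A B f. f \<in> Hom T A B \<longrightarrow> cmp T (idt T B) f = f \<and> cmp T f (idt T A) = f) \<and>
     (\<forall>A B C D f g h. f \<in> Hom T A B \<longrightarrow> g \<in> Hom T B C \<longrightarrow> h \<in> Hom T C D \<longrightarrow>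
        cmp T h (cmp T g f) = cmp T (cmp T h g) f)"

text \<open>By Yoneda, F_T is (equivalent to) the free finite-coproduct completion of T:
  an object is a finite list of objects of T (the coproduct of their representables),
  a morphism xs -> ys is a function f on indices together with, for each index i,
  a morphism xs!i -> ys!(f i) in T.\<close>

type_synonym 'm fmor = "(nat \<Rightarrow> nat) \<times> (nat \<Rightarrow> 'm)"

definition FOb :: "('o, 'm) cat \<Rightarrow> 'o list set" where
  "FOb T = {xs. set xs \<subseteq> Ob T}"

definition FHom :: "('o, 'm) cat \<Rightarrow> 'o list \<Rightarrow> 'o list \<Rightarrow> 'm fmor set" where
  "FHom T xs ys = {(f, g). \<forall>i<length xs. f i < length ys \<and> g i \<in> Hom T (xs ! i) (ys ! (f i))}"

definition feq :: "'o list \<Rightarrow> 'm fmor \<Rightarrow> 'm fmor \<Rightarrow> bool" where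
  "feq xs a b \<longleftrightarrow> (\<forall>i<length xs. fst a i = fst b i \<and> snd a i = snd b i)"

definition fcmp :: "('o, 'm) cat \<Rightarrow> 'm fmor \<Rightarrow> 'm fmor \<Rightarrow> 'm fmor" where
  "fcmp T b a = (fst b \<circ> fst a, \<lambda>i. cmp T (snd b (fst a i)) (snd a i))"

definition fid :: "('o, 'm) cat \<Rightarrow> 'o list \<Rightarrow> 'm fmor" where
  "fid T xs = (\<lambda>i. i, \<lambda>i. idt T (xs ! i))"

definition is_pullback :: "('o, 'm) cat \<Rightarrow> 'o list \<Rightarrow> 'o list \<Rightarrow> 'o list \<Rightarrow>
    'm fmor \<Rightarrow> 'm fmor \<Rightarrow> 'o list \<Rightarrow> 'm fmor \<Rightarrow> 'm fmor \<Rightarrow> bool" where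
  "is_pullback T A B C p q P a b \<longleftrightarrow>
     P \<in> FOb T \<and> a \<in> FHom T P A \<and> b \<in> FHom T P B \<and>
     feq P (fcmp T p a) (fcmp T q b) \<and>
     (\<forall>X\<in>FOb T. \<forall>x1 x2. x1 \<in> FHom T X A \<longrightarrow> x2 \<in> FHom T X B \<longrightarrow>
        feq X (fcmp T p x1) (fcmp T q x2) \<longrightarrow>
        (\<exists>u\<in>FHom T X P. feq X (fcmp T a u) x1 \<and> feq X (fcmp T b u) x2 \<and>
           (\<forall>u'\<in>FHom T X P. feq X (fcmp T a u') x1 \<and> feq X (fcmp T b u') x2 \<longrightarrow> feq X u u')))"

definition orbital :: "('o, 'm) cat \<Rightarrow> bool" where
  "orbital T \<longleftrightarrow>
     (\<forall>A\<in>FOb T. \<forall>B\<in>FOb T. \<forall>C\<in>FOb T. \<forall>p q. p \<in> FHom T A C \<longrightarrow> q \<in> FHom T B C \<longrightarrow>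
        (\<exists>P a b. is_pullback T A B C p q P a b))"

definition FVOb :: "('o, 'm) cat \<Rightarrow> 'o \<Rightarrow> ('o \<times> 'm) list set" where
  "FVOb T V = {S. V \<in> Ob T \<and> (\<forall>(U, m)\<in>set S. m \<in> Hom T U V)}"

definition fobj :: "('o \<times> 'm) list \<Rightarrow> 'o list" where
  "fobj S = map fst S"

text \<open>Structure map of S in F_T, from fobj S to [V].\<close>
definition str :: "('o \<times> 'm) list \<Rightarrow> 'm fmor" where
  "str S = (\<lambda>_. 0, \<lambda>i. snd (S ! i))"

definition viso :: "('o, 'm) cat \<Rightarrow> ('o \<times> 'm) list \<Rightarrow> ('o \<times> 'm) list \<Rightarrow> bool" where
  "viso T S S' \<longleftrightarrow>
     (\<exists>\<phi> \<psi>. \<phi> \<in> FHom T (fobj S) (fobj S') \<and> \<psi> \<in> FHom T (fobj S') (fobj S) \<and>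
        feq (fobj S) (fcmp T (str S') \<phi>) (str S) \<and> feq (fobj S') (fcmp T (str S) \<psi>) (str S') \<and>
        feq (fobj S) (fcmp T \<psi> \<phi>) (fid T (fobj S)) \<and> feq (fobj S') (fcmp T \<phi> \<psi>) (fid T (fobj S')))"

text \<open>R (in F_U) is a restriction Res^V_U S of S (in F_V) along h : U -> V:
  R is a pullback of fobj S -> [V] <- [U] in F_T, with R -> [U] its structure map.\<close>
definition is_restriction :: "('o, 'm) cat \<Rightarrow> 'o \<Rightarrow> 'o \<Rightarrow> 'm \<Rightarrow>
    ('o \<times> 'm) list \<Rightarrow> ('o \<times> 'm) list \<Rightarrow> bool" where
  "is_restriction T U V h S R \<longleftrightarrow> R \<in> FVOb T U \<and>
     (\<exists>a. is_pullback T (fobj S) [U] [V] (str S) (\<lambda>_. 0, \<lambda>_. h) (fobj R) a (str R))"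

definition Ind :: "('o, 'm) cat \<Rightarrow> 'm \<Rightarrow> ('o \<times> 'm) list \<Rightarrow> ('o \<times> 'm) list" where
  "Ind T h S = map (\<lambda>(W, m). (W, cmp T h m)) S"

definition terminal :: "('o, 'm) cat \<Rightarrow> 'o \<Rightarrow> ('o \<times> 'm) list" where
  "terminal T V = [(V, idt T V)]"

definition orbit_coprod :: "('o, 'm) cat \<Rightarrow> ('o \<times> 'm) list \<Rightarrow> (nat \<Rightarrow> ('o \<times> 'm) list)
    \<Rightarrow> ('o \<times> 'm) list" where
  "orbit_coprod T S Ts = concat (map (\<lambda>i. Ind T (snd (S ! i)) (Ts i)) [0..<length S])"

type_synonym ('o, 'm) tsubcat = "'o \<Rightarrow> ('o \<times> 'm) list set"

definition full_T_subcategory :: "('o, 'm) cat \<Rightarrow> ('o, 'm) tsubcat \<Rightarrow> bool" where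
  "full_T_subcategory T C \<longleftrightarrow>
     (\<forall>V. C V \<subseteq> FVOb T V) \<and>
     (\<forall>V S S'. S \<in> C V \<longrightarrow> S' \<in> FVOb T V \<longrightarrow> viso T S S' \<longrightarrow> S' \<in> C V) \<and>
     (\<forall>U V h S R. h \<in> Hom T U V \<longrightarrow> S \<in> C V \<longrightarrow> is_restriction T U V h S R \<longrightarrow> R \<in> C U)"

definition weak_indexing_system :: "('o, 'm) cat \<Rightarrow> ('o, 'm) tsubcat \<Rightarrow> bool" where
  "weak_indexing_system T C \<longleftrightarrow> full_T_subcategory T C \<and>
     (\<forall>V. C V \<noteq> {} \<longrightarrow> terminal T V \<in> C V) \<and>
     (\<forall>V S Ts. S \<in> C V \<longrightarrow> (\<forall>i<length S. Ts i \<in> C (fst (S ! i))) \<longrightarrow>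
        orbit_coprod T S Ts \<in> C V)"

definition one_color :: "('o, 'm) cat \<Rightarrow> ('o, 'm) tsubcat \<Rightarrow> bool" where
  "one_color T C \<longleftrightarrow> (\<forall>V\<in>Ob T. C V \<noteq> {})"

definition summand_closed :: "('o, 'm) tsubcat \<Rightarrow> bool" where
  "summand_closed C \<longleftrightarrow> (\<forall>V S S'. S @ S' \<in> C V \<longrightarrow> S \<in> C V \<and> S' \<in> C V)"

definition unital :: "('o, 'm) cat \<Rightarrow> ('o, 'm) tsubcat \<Rightarrow> bool" where
  "unital T C \<longleftrightarrow> one_color T C \<and> summand_closed C"

definition indexing_system :: "('o, 'm) cat \<Rightarrow> ('o, 'm) tsubcat \<Rightarrow> bool" where
  "indexing_system T C \<longleftrightarrow> weak_indexing_system T C \<and>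
     (\<forall>V\<in>Ob T. [] \<in> C V \<and> (\<forall>S S'. S \<in> C V \<longrightarrow> S' \<in> C V \<longrightarrow> S @ S' \<in> C V))"

definition colors :: "('o, 'm) cat \<Rightarrow> ('o, 'm) tsubcat \<Rightarrow> 'o set" where
  "colors T C = {V \<in> Ob T. terminal T V \<in> C V}"

definition upsilon :: "('o, 'm) cat \<Rightarrow> ('o, 'm) tsubcat \<Rightarrow> 'o set" where
  "upsilon T C = {V \<in> Ob T. [] \<in> C V}"

definition nabla :: "('o, 'm) cat \<Rightarrow> ('o, 'm) tsubcat \<Rightarrow> 'o set" where
  "nabla T C = {V \<in> Ob T. terminal T V @ terminal T V \<in> C V}"

end

theory Submission
  imports Defs
begin

(* Every orbit U of an admissible L in C_V is a color: in an orbital category the restriction of L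
   along U -> V exists, so C_U is nonempty and contains *_U.  Hence if upsilon(C) = c(C), the
   summands S and S' of L = S + S' are recovered as orbit coproducts over L choosing *_U on the
   orbits of one summand and the empty set on the others.  Dually, S + S' is the orbit coproduct
   over 2 * *_V with fibres S and S', which gives closure under coproducts once 2 * *_V is
   admissible. *)

lemma category_Hom_Ob:
  assumes "category T" and "f \<in> Hom T A B"
  shows "A \<in> Ob T" and "B \<in> Ob T"
  using assms unfolding category_def by blast+

lemma Ind_terminal:
  assumes "category T" and "h \<in> Hom T U V"
  shows "Ind T h (terminal T U) = [(U, h)]"
  using assms unfolding category_def Ind_def terminal_def by auto

lemma Ind_idt:
  assumes "category T" and "S \<in> FVOb T V"
  shows "Ind T (idt T V) S = S"
proof -
  have "\<forall>x\<in>set S. (\<lambda>(W, m). (W, cmp T (idt T V) m)) x = x"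
    using assms unfolding category_def FVOb_def by auto
  then show ?thesis unfolding Ind_def by (simp add: map_idI)
qed

lemma fobj_FOb:
  assumes "category T" and "S \<in> FVOb T V"
  shows "fobj S \<in> FOb T"
  using assms category_Hom_Ob(1) unfolding FOb_def fobj_def FVOb_def by fastforce

lemma str_FHom:
  assumes "S \<in> FVOb T V"
  shows "str S \<in> FHom T (fobj S) [V]"
  using assms by (auto simp: FHom_def str_def fobj_def FVOb_def)

lemma feq_fcmp_cong_left:
  assumes "u \<in> FHom T X P" and "feq P b b'"
  shows "feq X (fcmp T b' u) y = feq X (fcmp T b u) y"
  using assms by (auto simp: FHom_def feq_def fcmp_def)

lemma is_pullback_feq_right:
  assumes pb: "is_pullback T A B C p q P a b" and bb': "feq P b b'"
  shows "is_pullback T A B C p q P a b'"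
  unfolding is_pullback_def
proof (intro conjI ballI allI impI)
  show "P \<in> FOb T" and "a \<in> FHom T P A" using pb unfolding is_pullback_def by blast+
  show "b' \<in> FHom T P B" and "feq P (fcmp T p a) (fcmp T q b')"
    using pb bb' unfolding is_pullback_def FHom_def feq_def fcmp_def by auto
  fix X x1 x2
  assume "X \<in> FOb T" and "x1 \<in> FHom T X A" and "x2 \<in> FHom T X B"
    and "feq X (fcmp T p x1) (fcmp T q x2)"
  then obtain u where "u \<in> FHom T X P" "feq X (fcmp T a u) x1" "feq X (fcmp T b u) x2"
    and "\<forall>u'\<in>FHom T X P. feq X (fcmp T a u') x1 \<and> feq X (fcmp T b u') x2 \<longrightarrow> feq X u u'"
    using pb unfolding is_pullback_def by meson
  then show "\<exists>u\<in>FHom T X P. feq X (fcmp T a u) x1 \<and> feq X (fcmp T b' u) x2 \<and>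
      (\<forall>u'\<in>FHom T X P. feq X (fcmp T a u') x1 \<and> feq X (fcmp T b' u') x2 \<longrightarrow> feq X u u')"
    using feq_fcmp_cong_left[OF _ bb'] by blast
qed

lemma restriction_exists:
  assumes cat: "category T" and orb: "orbital T"
    and h: "h \<in> Hom T U V" and S: "S \<in> FVOb T V"
  obtains R where "is_restriction T U V h S R"
proof -
  have U: "U \<in> Ob T" and V: "V \<in> Ob T" using category_Hom_Ob[OF cat h] .
  have "((\<lambda>_. 0, \<lambda>_. h) :: 'b fmor) \<in> FHom T [U] [V]" using h by (auto simp: FHom_def)
  moreover have "[U] \<in> FOb T" "[V] \<in> FOb T" using U V by (auto simp: FOb_def)
  ultimately obtain P a b where pb: "is_pullback T (fobj S) [U] [V] (str S) (\<lambda>_. 0, \<lambda>_. h) P a b"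
    using orb[unfolded orbital_def, rule_format, OF fobj_FOb[OF cat S]] str_FHom[OF S] by blast
  define R where "R = map (\<lambda>i. (P ! i, snd b i)) [0..<length P]"
  have b: "b \<in> FHom T P [U]" using pb by (simp add: is_pullback_def)
  have fobj_R: "fobj R = P" unfolding R_def fobj_def by (rule nth_equalityI) auto
  have "R \<in> FVOb T U" using U b by (auto simp: R_def FVOb_def FHom_def)
  moreover have "feq (fobj R) b (str R)"
    using b fobj_R by (auto simp: feq_def FHom_def str_def R_def)
  ultimately have "is_restriction T U V h S R"
    using is_pullback_feq_right[OF pb[folded fobj_R]] unfolding is_restriction_def by blast
  then show thesis by (rule that)
qed

lemma orbit_coprod_select:
  assumes cat: "category T" and L: "L \<in> FVOb T V"
  shows "orbit_coprod T L (\<lambda>i. if P i then terminal T (fst (L ! i)) else [])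
         = map (nth L) (filter P [0..<length L])"
proof -
  have "Ind T (snd (L ! i)) (if P i then terminal T (fst (L ! i)) else [])
        = (if P i then [L ! i] else [])" if "i < length L" for i
  proof -
    have "snd (L ! i) \<in> Hom T (fst (L ! i)) V"
      using L nth_mem[OF that] unfolding FVOb_def by auto
    then show ?thesis using Ind_terminal[OF cat] by (auto simp: Ind_def)
  qed
  then have "orbit_coprod T L (\<lambda>i. if P i then terminal T (fst (L ! i)) else [])
             = concat (map (\<lambda>i. if P i then [L ! i] else []) [0..<length L])"
    unfolding orbit_coprod_def by (intro arg_cong[where f = concat] map_cong) simp_all
  also have "\<dots> = map (nth L) (filter P [0..<length L])"
  proof -
    have "concat (map (\<lambda>i. if P i then [L ! i] else []) is) = map (nth L) (filter P is)" for "is"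
      by (induction "is") simp_all
    then show ?thesis .
  qed
  finally show ?thesis .
qed

lemma orbit_coprod_select_append:
  assumes "category T" and "S @ S' \<in> FVOb T V"
  shows "orbit_coprod T (S @ S')
           (\<lambda>i. if i < length S then terminal T (fst ((S @ S') ! i)) else []) = S"
    and "orbit_coprod T (S @ S')
           (\<lambda>i. if \<not> i < length S then terminal T (fst ((S @ S') ! i)) else []) = S'"
proof -
  let ?L = "S @ S'"
  have upt: "[0..<length ?L] = [0..<length S] @ [length S..<length ?L]"
    by (simp flip: upt_add_eq_append)
  have "map (nth ?L) [0..<length S] = S"
    by (rule nth_equalityI) (simp_all add: nth_append)
  moreover have "map (nth ?L) [length S..<length ?L] = S'"
    by (rule nth_equalityI) (simp_all add: nth_append)
  ultimately show
    "orbit_coprod T ?L (\<lambda>i. if i < length S then terminal T (fst (?L ! i)) else []) = S"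
    "orbit_coprod T ?L (\<lambda>i. if \<not> i < length S then terminal T (fst (?L ! i)) else []) = S'"
    unfolding orbit_coprod_select[OF assms] upt by (simp_all add: filter_True filter_False)
qed

lemma orbit_coprod_two_terminal:
  assumes "category T" and "S \<in> FVOb T V" and "S' \<in> FVOb T V"
  shows "orbit_coprod T (terminal T V @ terminal T V) (\<lambda>i. if i = 0 then S else S') = S @ S'"
  using assms Ind_idt[OF assms(1)] by (simp add: orbit_coprod_def terminal_def upt_rec)

lemma weak_indexing_system_FVOb:
  "weak_indexing_system T C \<Longrightarrow> S \<in> C V \<Longrightarrow> S \<in> FVOb T V"
  unfolding weak_indexing_system_def full_T_subcategory_def by blast

lemma weak_indexing_system_restriction:
  "weak_indexing_system T C \<Longrightarrow> h \<in> Hom T U V \<Longrightarrow> S \<in> C V \<Longrightarrow>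
    is_restriction T U V h S R \<Longrightarrow> R \<in> C U"
  unfolding weak_indexing_system_def full_T_subcategory_def by blast

lemma weak_indexing_system_terminal:
  "weak_indexing_system T C \<Longrightarrow> S \<in> C V \<Longrightarrow> terminal T V \<in> C V"
  unfolding weak_indexing_system_def by blast

lemma weak_indexing_system_orbit_coprod:
  "weak_indexing_system T C \<Longrightarrow> S \<in> C V \<Longrightarrow> (\<And>i. i < length S \<Longrightarrow> Ts i \<in> C (fst (S ! i))) \<Longrightarrow>
    orbit_coprod T S Ts \<in> C V"
  unfolding weak_indexing_system_def by blast

lemma weak_indexing_system_orbit_in_colors:
  assumes cat: "category T" and orb: "orbital T" and C: "weak_indexing_system T C"
    and L: "L \<in> C V" and U: "(U, h) \<in> set L"
  shows "U \<in> colors T C"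
proof -
  have L_FVOb: "L \<in> FVOb T V" using weak_indexing_system_FVOb[OF C L] .
  then have h: "h \<in> Hom T U V" using U unfolding FVOb_def by auto
  obtain R where "is_restriction T U V h L R" using restriction_exists[OF cat orb h L_FVOb] .
  then have "R \<in> C U" using weak_indexing_system_restriction[OF C h L] by blast
  then show ?thesis
    using weak_indexing_system_terminal[OF C] category_Hom_Ob(1)[OF cat h]
    unfolding colors_def by blast
qed

lemma one_color_iff_colors_eq:
  assumes "weak_indexing_system T C"
  shows "one_color T C \<longleftrightarrow> colors T C = Ob T"
  using weak_indexing_system_terminal[OF assms]
  unfolding one_color_def colors_def by blast

lemma summand_closed_iff_upsilon_eq_colors:
  assumes cat: "category T" and orb: "orbital T" and C: "weak_indexing_system T C"
  shows "summand_closed C \<longleftrightarrow> upsilon T C = colors T C"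
proof
  assume "summand_closed C"
  then have "colors T C \<subseteq> upsilon T C"
    unfolding summand_closed_def colors_def upsilon_def by (metis (lifting) append_Nil2 mem_Collect_eq subsetI)
  moreover have "upsilon T C \<subseteq> colors T C"
    using weak_indexing_system_terminal[OF C] unfolding upsilon_def colors_def by blast
  ultimately show "upsilon T C = colors T C" by blast
next
  assume upsilon_colors: "upsilon T C = colors T C"
  show "summand_closed C" unfolding summand_closed_def
  proof (intro allI impI)
    fix V S S'
    assume L: "S @ S' \<in> C V"
    let ?L = "S @ S'"
    have "terminal T (fst (?L ! i)) \<in> C (fst (?L ! i)) \<and> [] \<in> C (fst (?L ! i))"
      if "i < length ?L" for i
    proof -
      have "fst (?L ! i) \<in> colors T C"
        using weak_indexing_system_orbit_in_colors[OF cat orb C L] nth_mem[OF that]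
        by (metis prod.collapse)
      then show ?thesis using upsilon_colors unfolding colors_def upsilon_def by blast
    qed
    then have "orbit_coprod T ?L (\<lambda>i. if i < length S then terminal T (fst (?L ! i)) else []) \<in> C V"
      and "orbit_coprod T ?L (\<lambda>i. if \<not> i < length S then terminal T (fst (?L ! i)) else []) \<in> C V"
      using weak_indexing_system_orbit_coprod[OF C L] by simp_all
    then show "S \<in> C V \<and> S' \<in> C V"
      using orbit_coprod_select_append[OF cat weak_indexing_system_FVOb[OF C L]] by simp
  qed
qed

lemma unital_iff_upsilon_eq:
  assumes "category T" and "orbital T" and C: "weak_indexing_system T C"
  shows "unital T C \<longleftrightarrow> upsilon T C = Ob T"
proof -
  have "upsilon T C \<subseteq> colors T C" and "colors T C \<subseteq> Ob T"
    using weak_indexing_system_terminal[OF C] unfolding upsilon_def colors_def by blast+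
  then show ?thesis
    using one_color_iff_colors_eq[OF C] summand_closed_iff_upsilon_eq_colors[OF assms]
    unfolding unital_def by blast
qed

lemma indexing_system_iff_upsilon_nabla:
  assumes cat: "category T" and C: "weak_indexing_system T C"
  shows "indexing_system T C \<longleftrightarrow> upsilon T C \<inter> nabla T C = Ob T"
proof
  assume "indexing_system T C"
  then show "upsilon T C \<inter> nabla T C = Ob T"
    using weak_indexing_system_terminal[OF C]
    unfolding indexing_system_def upsilon_def nabla_def by blast
next
  assume upsilon_nabla: "upsilon T C \<inter> nabla T C = Ob T"
  have "S @ S' \<in> C V" if V: "V \<in> Ob T" and S: "S \<in> C V" and S': "S' \<in> C V" for V S S'
  proof -
    have "terminal T V @ terminal T V \<in> C V" using upsilon_nabla V unfolding nabla_def by blast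
    then have "orbit_coprod T (terminal T V @ terminal T V) (\<lambda>i. if i = 0 then S else S') \<in> C V"
      by (rule weak_indexing_system_orbit_coprod[OF C])
        (use S S' in \<open>auto simp: terminal_def nth_Cons'\<close>)
    then show ?thesis
      using orbit_coprod_two_terminal[OF cat] weak_indexing_system_FVOb[OF C] S S' by simp
  qed
  moreover have "[] \<in> C V" if "V \<in> Ob T" for V
    using upsilon_nabla that unfolding upsilon_def by blast
  ultimately show "indexing_system T C" using C unfolding indexing_system_def by blast
qed

theorem mainTheorem6:
  fixes T :: "('o, 'm) cat" and C :: "('o, 'm) tsubcat"
  assumes "category T" and "orbital T" and "weak_indexing_system T C"
  shows "(one_color T C \<longleftrightarrow> colors T C = Ob T) \<and>
         (summand_closed C \<longleftrightarrow> upsilon T C = colors T C) \<and>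
         (unital T C \<longleftrightarrow> upsilon T C = Ob T) \<and>
         (indexing_system T C \<longleftrightarrow> upsilon T C \<inter> nabla T C = Ob T)"
  using one_color_iff_colors_eq[OF assms(3)] summand_closed_iff_upsilon_eq_colors[OF assms]
    unital_iff_upsilon_eq[OF assms] indexing_system_iff_upsilon_nabla[OF assms(1,3)]
  by blast

end
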